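(* For any graph $\Gamma_1$ and any graph $\Gamma_2$ of order $n_2$ and maximum degree $\Delta_2$, and any integer $k$, $\gamma_{k-\Delta_2}^o(\Gamma_1\times\Gamma_2)\le n_2\,\gamma_k^o(\Gamma_1)$.
   Context: Graphs are finite and simple. In a graph $G=(V,E)$, for $S\subseteq V$ and $v\in V$, $\delta_S(v)$ is the number of neighbours of $v$ in $S$, $\overline{S}=V\setminus S$, and $\partial(S)$ the set of vertices of $\overline{S}$ with a neighbour in $S$. A nonempty $S$ is an offensive $k$-alliance in $G$ if $\delta_S(v)\ge\delta_{\overline{S}}(v)+k$ for every $v\in\partial(S)$, and a global offensive $k$-alliance if moreover it is dominating. $\gamma_k^o(G)$ is the minimum cardinality of a global offensive $k$-alliance in $G$. The Cartesian product $\Gamma_1\times\Gamma_2$ has vertex set $V_1\times V_2$, with $(u,v)\sim(u',v')$ iff either $u=u'$ and $v\sim v'$, or $v=v'$ and $u\sim u'$. *)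

theory Defs
  imports Main
begin

definition simple_graph :: "'a set \<Rightarrow> ('a \<Rightarrow> 'a \<Rightarrow> bool) \<Rightarrow> bool" where
  "simple_graph V E \<longleftrightarrow> finite V \<and> (\<forall>u v. E u v \<longrightarrow> u \<in> V \<and> v \<in> V)
     \<and> (\<forall>u v. E u v \<longrightarrow> E v u) \<and> (\<forall>v. \<not> E v v)"

definition degree :: "'a set \<Rightarrow> ('a \<Rightarrow> 'a \<Rightarrow> bool) \<Rightarrow> 'a \<Rightarrow> nat" where
  "degree V E v = card {u \<in> V. E v u}"

definition max_degree :: "'a set \<Rightarrow> ('a \<Rightarrow> 'a \<Rightarrow> bool) \<Rightarrow> nat" where
  "max_degree V E = Max ((degree V E) ` V)"

definition delta :: "('a \<Rightarrow> 'a \<Rightarrow> bool) \<Rightarrow> 'a set \<Rightarrow> 'a \<Rightarrow> nat" where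
  "delta E S v = card {u \<in> S. E v u}"

definition boundary :: "'a set \<Rightarrow> ('a \<Rightarrow> 'a \<Rightarrow> bool) \<Rightarrow> 'a set \<Rightarrow> 'a set" where
  "boundary V E S = {v \<in> V - S. \<exists>u \<in> S. E v u}"

definition offensive_alliance :: "'a set \<Rightarrow> ('a \<Rightarrow> 'a \<Rightarrow> bool) \<Rightarrow> int \<Rightarrow> 'a set \<Rightarrow> bool" where
  "offensive_alliance V E k S \<longleftrightarrow> S \<noteq> {} \<and> S \<subseteq> V \<and>
     (\<forall>v \<in> boundary V E S. int (delta E S v) \<ge> int (delta E (V - S) v) + k)"

definition dominating :: "'a set \<Rightarrow> ('a \<Rightarrow> 'a \<Rightarrow> bool) \<Rightarrow> 'a set \<Rightarrow> bool" where
  "dominating V E S \<longleftrightarrow> S \<subseteq> V \<and> (\<forall>v \<in> V - S. \<exists>u \<in> S. E v u)"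

definition global_offensive_alliance :: "'a set \<Rightarrow> ('a \<Rightarrow> 'a \<Rightarrow> bool) \<Rightarrow> int \<Rightarrow> 'a set \<Rightarrow> bool" where
  "global_offensive_alliance V E k S \<longleftrightarrow> offensive_alliance V E k S \<and> dominating V E S"

definition gamma_o :: "int \<Rightarrow> 'a set \<Rightarrow> ('a \<Rightarrow> 'a \<Rightarrow> bool) \<Rightarrow> nat" where
  "gamma_o k V E = (LEAST n. \<exists>S. global_offensive_alliance V E k S \<and> card S = n)"

definition cart_edge :: "('a \<Rightarrow> 'a \<Rightarrow> bool) \<Rightarrow> ('b \<Rightarrow> 'b \<Rightarrow> bool) \<Rightarrow> 'a \<times> 'b \<Rightarrow> 'a \<times> 'b \<Rightarrow> bool" where
  "cart_edge E1 E2 = (\<lambda>(u, v) (u', v'). (u = u' \<and> E2 v v') \<or> (v = v' \<and> E1 u u'))"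

end

theory Submission
  imports Defs
begin

(* If S is a global offensive k-alliance of G1, then S x V2 is a global offensive
   (k - Delta2)-alliance of G1 x G2: a boundary vertex (u, v) sees exactly the S-neighbours of u
   inside its own G1-layer, while outside S x V2 it sees at most the (V1 - S)-neighbours of u
   plus the at most Delta2 neighbours of v in its G2-layer. *)

lemma global_offensive_alliance_whole:
  assumes "V \<noteq> {}"
  shows "global_offensive_alliance V E k V"
  using assms
  unfolding global_offensive_alliance_def offensive_alliance_def dominating_def boundary_def
  by auto

lemma gamma_o_attained:
  assumes "V \<noteq> {}"
  shows "\<exists>S. global_offensive_alliance V E k S \<and> card S = gamma_o k V E"
  unfolding gamma_o_def
  by (rule LeastI_ex) (use global_offensive_alliance_whole[OF assms] in blast)

lemma gamma_o_le_card:
  assumes "global_offensive_alliance V E k S"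
  shows "gamma_o k V E \<le> card S"
  unfolding gamma_o_def by (rule Least_le) (use assms in blast)

lemma degree_le_max_degree:
  assumes "finite V" and "v \<in> V"
  shows "degree V E v \<le> max_degree V E"
  unfolding max_degree_def using assms by (intro Max_ge) auto

lemma delta_cart_edge_layer:
  assumes "u \<notin> S" and "v \<in> V2"
  shows "delta (cart_edge E1 E2) (S \<times> V2) (u, v) = delta E1 S u"
proof -
  have "{y \<in> S \<times> V2. cart_edge E1 E2 (u, v) y} = (\<lambda>u'. (u', v)) ` {u' \<in> S. E1 u u'}"
    using assms unfolding cart_edge_def by auto
  then show ?thesis
    unfolding delta_def by (simp add: card_image inj_on_def)
qed

lemma delta_cart_edge_outside_le:
  assumes "finite V1" and "finite V2"
  shows "delta (cart_edge E1 E2) (V1 \<times> V2 - S \<times> V2) (u, v)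
           \<le> delta E1 (V1 - S) u + degree V2 E2 v"
proof -
  let ?A = "(\<lambda>u'. (u', v)) ` {u' \<in> V1 - S. E1 u u'}"
  let ?B = "(\<lambda>v'. (u, v')) ` {v' \<in> V2. E2 v v'}"
  have "{y \<in> V1 \<times> V2 - S \<times> V2. cart_edge E1 E2 (u, v) y} \<subseteq> ?A \<union> ?B"
    unfolding cart_edge_def by auto
  then have "delta (cart_edge E1 E2) (V1 \<times> V2 - S \<times> V2) (u, v) \<le> card (?A \<union> ?B)"
    unfolding delta_def by (rule card_mono[rotated]) (use assms in auto)
  also have "\<dots> \<le> card ?A + card ?B"
    by (rule card_Un_le)
  also have "\<dots> = delta E1 (V1 - S) u + degree V2 E2 v"
    unfolding delta_def degree_def by (simp add: card_image inj_on_def)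
  finally show ?thesis .
qed

lemma global_offensive_alliance_cart_product:
  assumes fin: "finite V1" "finite V2" and "V2 \<noteq> {}"
    and alliance: "global_offensive_alliance V1 E1 k S"
  shows "global_offensive_alliance (V1 \<times> V2) (cart_edge E1 E2)
           (k - int (max_degree V2 E2)) (S \<times> V2)"
proof -
  have S: "S \<subseteq> V1" "S \<noteq> {}" and dom: "\<And>u. u \<in> V1 - S \<Longrightarrow> \<exists>s \<in> S. E1 u s"
    and off: "\<And>u. u \<in> boundary V1 E1 S \<Longrightarrow> int (delta E1 (V1 - S) u) + k \<le> int (delta E1 S u)"
    using alliance
    unfolding global_offensive_alliance_def offensive_alliance_def dominating_def by auto
  have dominating: "\<exists>y \<in> S \<times> V2. cart_edge E1 E2 x y" if outside: "x \<in> V1 \<times> V2 - S \<times> V2" for x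
  proof -
    obtain u v where x: "x = (u, v)" "u \<in> V1 - S" "v \<in> V2"
      using outside by auto
    then obtain s where "s \<in> S" "E1 u s"
      using dom by blast
    with x show ?thesis
      by (intro bexI[of _ "(s, v)"]) (auto simp: cart_edge_def)
  qed
  have offensive: "int (delta (cart_edge E1 E2) (V1 \<times> V2 - S \<times> V2) x) + (k - int (max_degree V2 E2))
                     \<le> int (delta (cart_edge E1 E2) (S \<times> V2) x)"
    if boundary: "x \<in> boundary (V1 \<times> V2) (cart_edge E1 E2) (S \<times> V2)" for x
  proof -
    obtain u v where x: "x = (u, v)" "u \<in> V1" "u \<notin> S" "v \<in> V2"
      using boundary unfolding boundary_def by auto
    have "u \<in> boundary V1 E1 S"
      using dom x unfolding boundary_def by auto
    moreover have "degree V2 E2 v \<le> max_degree V2 E2"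
      using fin x by (intro degree_le_max_degree)
    ultimately show ?thesis
      using off delta_cart_edge_outside_le[OF fin, of E1 E2 S u v]
        delta_cart_edge_layer[OF x(3,4)] x
      by force
  qed
  show ?thesis
    unfolding global_offensive_alliance_def offensive_alliance_def dominating_def
    using S assms(3) dominating offensive by auto
qed

theorem mainTheorem14:
  fixes V1 :: "'a set" and E1 :: "'a \<Rightarrow> 'a \<Rightarrow> bool"
    and V2 :: "'b set" and E2 :: "'b \<Rightarrow> 'b \<Rightarrow> bool" and k :: int
  assumes "simple_graph V1 E1" and "V1 \<noteq> {}"
    and "simple_graph V2 E2" and "V2 \<noteq> {}"
  shows "gamma_o (k - int (max_degree V2 E2)) (V1 \<times> V2) (cart_edge E1 E2)
           \<le> card V2 * gamma_o k V1 E1"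
proof -
  obtain S where S: "global_offensive_alliance V1 E1 k S" and card_S: "card S = gamma_o k V1 E1"
    using gamma_o_attained[OF assms(2)] by blast
  have "finite V1" "finite V2"
    using assms(1,3) unfolding simple_graph_def by auto
  then have "global_offensive_alliance (V1 \<times> V2) (cart_edge E1 E2)
               (k - int (max_degree V2 E2)) (S \<times> V2)"
    using assms(4) S by (rule global_offensive_alliance_cart_product)
  then have "gamma_o (k - int (max_degree V2 E2)) (V1 \<times> V2) (cart_edge E1 E2) \<le> card (S \<times> V2)"
    by (rule gamma_o_le_card)
  also have "\<dots> = card V2 * gamma_o k V1 E1"
    using card_S by (simp add: card_cartesian_product)
  finally show ?thesis .
qed

end
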